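(* Let $n\ge 2$ be an integer and let $(x_0,y_0),\dots,(x_n,y_n)\in\mathbb{R}^2$ with $a:=x_0<x_1<\dots<x_n=:b$. For each $k\in\{1,\dots,n\}$ fix $d_k\in[0,1)$ and put \[ a_k=\frac{x_k-x_{k-1}}{x_n-x_0},\quad b_k=\frac{x_nx_{k-1}-x_0x_k}{x_n-x_0},\quad c_k=\frac{y_k-y_{k-1}}{x_n-x_0}-d_k\frac{y_n-y_0}{x_n-x_0},\quad e_k=\frac{x_ny_{k-1}-x_0y_k}{x_n-x_0}-d_k\frac{x_ny_0-x_0y_n}{x_n-x_0}, \] and $f_k(x,y)=(a_kx+b_k,\;c_kx+d_ky+e_k)$. Let $\theta=1$ if $c_1=\dots=c_n=0$ and $\theta=\dfrac{1-\max_k a_k}{2\max_k|c_k|}$ otherwise. Let $f:[a,b]\to\mathbb{R}$ be the affine fractal interpolation function associated with these data. For $k\in\{1,\dots,n\}$ set \[ u_k=\frac{b_k}{1-a_k},\qquad v_k=\frac{b_kc_k}{(1-a_k)(1-d_k)}+\frac{e_k}{1-d_k},\qquad s_k=\max\{a_k+\theta|c_k|,\,d_k\}, \] and $M=\max_{i,j\in\{1,\dots,n\}}\left(|u_i-u_j|+\theta|v_i-v_j|\right)$. Let $\sigma$ be a permutation of $\{1,\dots,n\}$ with $s_{\sigma(1)}\le\dots\le s_{\sigma(n)}$, and let $D=1-s_{\sigma(n-1)}s_{\sigma(n)}$. Define \[ A=\min\left\{\min_{1\le j\le n-1}\left(v_{\sigma(j)}-\frac{Ms_{\sigma(j)}(1+s_{\sigma(n)})}{\theta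 D}\right),\ v_{\sigma(n)}-\frac{Ms_{\sigma(n)}(1+s_{\sigma(n-1)})}{\theta D}\right\}, \] \[ B=\max\left\{\max_{1\le j\le n-1}\left(v_{\sigma(j)}+\frac{Ms_{\sigma(j)}(1+s_{\sigma(n)})}{\theta D}\right),\ v_{\sigma(n)}+\frac{Ms_{\sigma(n)}(1+s_{\sigma(n-1)})}{\theta D}\right\}. \] Then $f([a,b])\subseteq[A,B]$.
   Context: The maps $f_k$ are contractions for the metric $\rho((u_1,v_1),(u_2,v_2))=|u_1-u_2|+\theta|v_1-v_2|$ on $\mathbb{R}^2$, and the attractor of the iterated function system $\{f_1,\dots,f_n\}$ is the unique nonempty compact set $K\subseteq\mathbb{R}^2$ with $K=\bigcup_{k=1}^n f_k(K)$. The affine fractal interpolation function is the continuous function $f:[a,b]\to\mathbb{R}$ with $f(x_k)=y_k$ for all $k\in\{0,\dots,n\}$ whose graph $\{(x,f(x)):x\in[a,b]\}$ equals this attractor. Here $(u_k,v_k)$ is the fixed point of $f_k$ and $s_k$ its Lipschitz constant with respect to $\rho$. *)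

theory Defs
  imports "HOL-Analysis.Analysis"
begin

definition ifs_attractor :: "(nat \<Rightarrow> real \<times> real \<Rightarrow> real \<times> real) \<Rightarrow> nat \<Rightarrow> (real \<times> real) set" where
  "ifs_attractor fs n = (THE K. K \<noteq> {} \<and> compact K \<and> K = (\<Union>k\<in>{1..n}. fs k ` K))"

end

theory Submission
  imports Defs
begin

(* Let G be the attractor and p_k = (u_k, v_k) the fixed point of f_k.  Each point of G lies in a
   piece f_k(G); let r_k be the largest rho-distance from p_k to a point of f_k(G).  A farthest
   point is f_k(w) with w in some piece f_j(G), so contractivity gives r_k <= s_k r_k, i.e. r_k = 0,
   if j = k, and r_k <= s_k (r_j + M) otherwise.  Applying this recursion twice at the largest
   radius, and bounding a product s_i s_j of distinct indices by s_sigma(n-1) s_sigma(n), gives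
   r_k <= M s_k (1 + s_sigma(n)) / D for every k, and r_sigma(n) <= M s_sigma(n) (1 + s_sigma(n-1)) / D.
   As theta |f(t) - v_k| <= rho((t, f t), p_k), every value of f lies within r_k / theta of some v_k.

   The attractor is well defined for rho-contractions: the closure of the orbit of a fixed point is
   a nonempty compact invariant set, and any two such sets are within s^m of each other for all m. *)

section \<open>The weighted metric\<close>

definition rho :: "real \<Rightarrow> real \<times> real \<Rightarrow> real \<times> real \<Rightarrow> real" where
  "rho \<theta> p q = \<bar>fst p - fst q\<bar> + \<theta> * \<bar>snd p - snd q\<bar>"

lemma rho_nonneg: "0 \<le> \<theta> \<Longrightarrow> 0 \<le> rho \<theta> p q"
  unfolding rho_def by simp

lemma rho_triangle:
  assumes "0 \<le> \<theta>"
  shows "rho \<theta> p r \<le> rho \<theta> p q + rho \<theta> q r"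
proof -
  have "\<theta> * \<bar>snd p - snd r\<bar> \<le> \<theta> * (\<bar>snd p - snd q\<bar> + \<bar>snd q - snd r\<bar>)"
    using assms by (intro mult_left_mono) auto
  then show ?thesis
    unfolding rho_def distrib_left by linarith
qed

lemma dist_le_rho:
  assumes "0 \<le> \<theta>"
  shows "min 1 \<theta> * dist p q \<le> rho \<theta> p q"
proof -
  have "dist p q \<le> \<bar>fst p - fst q\<bar> + \<bar>snd p - snd q\<bar>"
    using sqrt_sum_squares_le_sum_abs[of "fst p - fst q" "snd p - snd q"]
    by (simp add: dist_prod_def dist_real_def)
  then have "min 1 \<theta> * dist p q \<le> min 1 \<theta> * \<bar>fst p - fst q\<bar> + min 1 \<theta> * \<bar>snd p - snd q\<bar>"
    using assms by (simp add: mult_left_mono flip: distrib_left)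
  also have "\<dots> \<le> 1 * \<bar>fst p - fst q\<bar> + \<theta> * \<bar>snd p - snd q\<bar>"
    by (intro add_mono mult_right_mono) auto
  finally show ?thesis
    unfolding rho_def by simp
qed

lemma rho_le_dist:
  assumes "0 \<le> \<theta>"
  shows "rho \<theta> p q \<le> (1 + \<theta>) * dist p q"
  using dist_fst_le[of p q] dist_snd_le[of p q] mult_left_mono[OF dist_snd_le[of p q] assms]
  by (simp add: rho_def dist_real_def algebra_simps)

lemma rho_lipschitz_continuous_on:
  assumes "0 < \<theta>" "0 \<le> L" and lip: "\<And>p q. rho \<theta> (f p) (f q) \<le> L * rho \<theta> p q"
  shows "continuous_on S f"
proof -
  have "dist (f p) (f q) \<le> L * (1 + \<theta>) / min 1 \<theta> * dist p q" for p q
  proof -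
    have "min 1 \<theta> * dist (f p) (f q) \<le> L * rho \<theta> p q"
      using dist_le_rho[of \<theta> "f p" "f q"] lip[of p q] assms(1) by simp
    also have "\<dots> \<le> L * ((1 + \<theta>) * dist p q)"
      using rho_le_dist[of \<theta> p q] assms by (simp add: mult_left_mono)
    finally show ?thesis
      using assms(1) by (simp add: field_simps)
  qed
  then have "(L * (1 + \<theta>) / min 1 \<theta>)-lipschitz_on UNIV f"
    using assms by (intro lipschitz_onI) auto
  then show ?thesis
    using lipschitz_on_continuous_on continuous_on_subset by blast
qed

section \<open>Attractors of rho-contractive systems\<close>

inductive_set ifs_orbit :: "(nat \<Rightarrow> 'a \<Rightarrow> 'a) \<Rightarrow> nat \<Rightarrow> 'a \<Rightarrow> 'a set"
  for fs n p0 where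
  base: "p0 \<in> ifs_orbit fs n p0"
| step: "q \<in> ifs_orbit fs n p0 \<Longrightarrow> k \<in> {1..n} \<Longrightarrow> fs k q \<in> ifs_orbit fs n p0"

lemma ifs_orbit_rho_bound:
  fixes fs :: "nat \<Rightarrow> real \<times> real \<Rightarrow> real \<times> real"
  assumes "0 \<le> \<theta>" "0 \<le> s" "s < 1"
    and contr: "\<And>k p q. k \<in> {1..n} \<Longrightarrow> rho \<theta> (fs k p) (fs k q) \<le> s * rho \<theta> p q"
    and "q \<in> ifs_orbit fs n p0"
  shows "rho \<theta> q p0 \<le> (\<Sum>k\<in>{1..n}. rho \<theta> (fs k p0) p0) / (1 - s)"
proof -
  define c where "c = (\<Sum>k\<in>{1..n}. rho \<theta> (fs k p0) p0)"
  have c: "rho \<theta> (fs k p0) p0 \<le> c" if "k \<in> {1..n}" for k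
    unfolding c_def using that assms(1) by (intro member_le_sum) (auto intro: rho_nonneg)
  have "0 \<le> c"
    unfolding c_def using assms(1) by (intro sum_nonneg) (auto intro: rho_nonneg)
  then have R: "0 \<le> c / (1 - s)" "s * (c / (1 - s)) + c = c / (1 - s)"
    using assms(3) by (auto simp: field_simps)
  show ?thesis
    using assms(5) unfolding c_def[symmetric]
  proof (induction rule: ifs_orbit.induct)
    case base
    then show ?case
      using R by (simp add: rho_def)
  next
    case (step q k)
    have "rho \<theta> (fs k q) p0 \<le> rho \<theta> (fs k q) (fs k p0) + rho \<theta> (fs k p0) p0"
      using assms(1) by (rule rho_triangle)
    also have "\<dots> \<le> s * (c / (1 - s)) + c"
      using contr[OF step.hyps(2), of q p0] c[OF step.hyps(2)] step.IH assms(2)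
      by (smt (verit) mult_left_mono)
    finally show ?case
      using R by simp
  qed
qed

lemma ifs_orbit_bounded:
  fixes fs :: "nat \<Rightarrow> real \<times> real \<Rightarrow> real \<times> real"
  assumes "0 < \<theta>" "0 \<le> s" "s < 1"
    and contr: "\<And>k p q. k \<in> {1..n} \<Longrightarrow> rho \<theta> (fs k p) (fs k q) \<le> s * rho \<theta> p q"
  shows "bounded (ifs_orbit fs n p0)"
proof -
  define R where "R = (\<Sum>k\<in>{1..n}. rho \<theta> (fs k p0) p0) / (1 - s)"
  have "ifs_orbit fs n p0 \<subseteq> cball p0 (R / min 1 \<theta>)"
  proof
    fix q assume "q \<in> ifs_orbit fs n p0"
    then have "min 1 \<theta> * dist q p0 \<le> R"
      unfolding R_def using assms(1) by (intro order_trans[OF dist_le_rho ifs_orbit_rho_bound[OF _ assms(2-4)]]) auto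
    then show "q \<in> cball p0 (R / min 1 \<theta>)"
      using assms(1) by (simp add: field_simps dist_commute)
  qed
  then show ?thesis
    using bounded_cball bounded_subset by blast
qed

lemma ifs_orbit_subset_images:
  assumes "k0 \<in> {1..n}" "fs k0 p0 = p0"
  shows "ifs_orbit fs n p0 \<subseteq> (\<Union>k\<in>{1..n}. fs k ` ifs_orbit fs n p0)"
proof
  fix q assume "q \<in> ifs_orbit fs n p0"
  then show "q \<in> (\<Union>k\<in>{1..n}. fs k ` ifs_orbit fs n p0)"
  proof cases
    case base
    then show ?thesis
      using assms ifs_orbit.base by (metis UN_iff image_eqI)
  next
    case (step q' k)
    then show ?thesis
      by blast
  qed
qed

lemma ifs_invariant_set_exists:
  fixes fs :: "nat \<Rightarrow> real \<times> real \<Rightarrow> real \<times> real"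
  assumes "0 < \<theta>" "0 \<le> s" "s < 1"
    and contr: "\<And>k p q. k \<in> {1..n} \<Longrightarrow> rho \<theta> (fs k p) (fs k q) \<le> s * rho \<theta> p q"
    and fixed: "k0 \<in> {1..n}" "fs k0 p0 = p0"
  shows "\<exists>K. K \<noteq> {} \<and> compact K \<and> K = (\<Union>k\<in>{1..n}. fs k ` K)"
proof (intro exI conjI)
  define K where "K = closure (ifs_orbit fs n p0)"
  have cont: "continuous_on S (fs k)" if "k \<in> {1..n}" for k S
    by (rule rho_lipschitz_continuous_on[OF assms(1,2) contr[OF that]])
  show "K \<noteq> {}"
    unfolding K_def using ifs_orbit.base[of p0 fs n] closure_subset by auto
  show "compact K"
    unfolding K_def using ifs_orbit_bounded[OF assms(1-4)] by (simp add: compact_closure)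
  have compact_union: "compact (\<Union>k\<in>{1..n}. fs k ` K)"
  proof (rule compact_UN)
    show "compact (fs k ` K)" if "k \<in> {1..n}" for k
      using compact_continuous_image[OF cont[OF that] \<open>compact K\<close>] .
  qed simp
  have "fs k ` K \<subseteq> K" if "k \<in> {1..n}" for k
    unfolding K_def
  proof (rule image_closure_subset[OF cont[OF that]])
    show "fs k ` ifs_orbit fs n p0 \<subseteq> closure (ifs_orbit fs n p0)"
      using ifs_orbit.step[OF _ that] closure_subset by (meson image_subsetI subsetD)
  qed simp
  moreover have "ifs_orbit fs n p0 \<subseteq> (\<Union>k\<in>{1..n}. fs k ` K)"
    using ifs_orbit_subset_images[where fs = fs, OF fixed] closure_subset unfolding K_def by blast
  then have "K \<subseteq> (\<Union>k\<in>{1..n}. fs k ` K)"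
    using compact_imp_closed[OF compact_union] unfolding K_def by (rule closure_minimal)
  ultimately show "K = (\<Union>k\<in>{1..n}. fs k ` K)"
    by blast
qed

lemma ifs_invariant_set_approx:
  assumes "0 \<le> s"
    and contr: "\<And>k p q. k \<in> {1..n} \<Longrightarrow> rho \<theta> (fs k p) (fs k q) \<le> s * rho \<theta> p q"
    and K1: "K1 \<subseteq> (\<Union>k\<in>{1..n}. fs k ` K1)" and K2: "\<And>k. k \<in> {1..n} \<Longrightarrow> fs k ` K2 \<subseteq> K2"
    and R: "\<forall>p\<in>K1. \<exists>q\<in>K2. rho \<theta> p q \<le> R"
  shows "\<forall>p\<in>K1. \<exists>q\<in>K2. rho \<theta> p q \<le> s ^ m * R"
proof (induction m)
  case 0
  then show ?case
    using R by simp
next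
  case (Suc m)
  show ?case
  proof
    fix p assume "p \<in> K1"
    then obtain k p' where k: "k \<in> {1..n}" "p' \<in> K1" "p = fs k p'"
      using K1 by blast
    then obtain q' where q': "q' \<in> K2" "rho \<theta> p' q' \<le> s ^ m * R"
      using Suc.IH by blast
    have "rho \<theta> p (fs k q') \<le> s * (s ^ m * R)"
      using contr[OF k(1), of p' q'] q'(2) assms(1) k(3) by (smt (verit) mult_left_mono)
    moreover have "fs k q' \<in> K2"
      using K2[OF k(1)] q'(1) by blast
    ultimately show "\<exists>q\<in>K2. rho \<theta> p q \<le> s ^ Suc m * R"
      by (auto simp: mult.assoc)
  qed
qed

lemma rho_approx_mem_closed:
  assumes "0 < \<theta>" "closed K" "0 \<le> s" "s < 1" "0 \<le> R"
    and approx: "\<And>m. \<exists>q\<in>K. rho \<theta> p q \<le> s ^ m * R"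
  shows "p \<in> K"
proof -
  have "\<exists>q\<in>K. dist q p < \<epsilon>" if "0 < \<epsilon>" for \<epsilon>
  proof -
    have "0 < \<epsilon> * min 1 \<theta> / (R + 1)"
      using that assms(1,5) by simp
    then obtain m where m: "s ^ m < \<epsilon> * min 1 \<theta> / (R + 1)"
      using real_arch_pow_inv[OF _ assms(4)] by blast
    obtain q where q: "q \<in> K" "rho \<theta> p q \<le> s ^ m * R"
      using approx by blast
    have "min 1 \<theta> * dist q p \<le> s ^ m * (R + 1)"
      using dist_le_rho[of \<theta> p q] q(2) assms(1,3)
      by (smt (verit) dist_commute mult_left_mono zero_le_power)
    also have "\<dots> < \<epsilon> * min 1 \<theta>"
      using m assms(5) by (simp add: field_simps)
    finally show ?thesis
      using q(1) assms(1) by (auto simp: mult.commute)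
  qed
  then show ?thesis
    using closed_approachable[OF assms(2)] by blast
qed

lemma ifs_invariant_set_subset:
  fixes fs :: "nat \<Rightarrow> real \<times> real \<Rightarrow> real \<times> real"
  assumes "0 < \<theta>" "0 \<le> s" "s < 1"
    and contr: "\<And>k p q. k \<in> {1..n} \<Longrightarrow> rho \<theta> (fs k p) (fs k q) \<le> s * rho \<theta> p q"
    and K1: "compact K1" "K1 \<subseteq> (\<Union>k\<in>{1..n}. fs k ` K1)"
    and K2: "K2 \<noteq> {}" "compact K2" "\<And>k. k \<in> {1..n} \<Longrightarrow> fs k ` K2 \<subseteq> K2"
  shows "K1 \<subseteq> K2"
proof
  fix p assume p: "p \<in> K1"
  obtain q0 where q0: "q0 \<in> K2"
    using K2(1) by blast
  define R where "R = (1 + \<theta>) * diameter (K1 \<union> K2)"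
  have R: "rho \<theta> p' q0 \<le> R" if "p' \<in> K1" for p'
  proof -
    have "dist p' q0 \<le> diameter (K1 \<union> K2)"
      using K1(1) K2(2) that q0 by (intro diameter_bounded_bound) (auto intro: compact_imp_bounded)
    then show ?thesis
      unfolding R_def using rho_le_dist[of \<theta> p' q0] assms(1) by (smt (verit) mult_left_mono)
  qed
  then have "\<forall>p\<in>K1. \<exists>q\<in>K2. rho \<theta> p q \<le> s ^ m * R" for m
    using q0 by (intro ifs_invariant_set_approx[OF assms(2) contr K1(2) K2(3)]) auto
  moreover have "0 \<le> R"
    using R[OF p] rho_nonneg[of \<theta> p q0] assms(1) by linarith
  ultimately show "p \<in> K2"
    using p assms(1-3) compact_imp_closed[OF K2(2)] by (intro rho_approx_mem_closed) auto
qed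

lemma ifs_invariant_set_unique:
  fixes fs :: "nat \<Rightarrow> real \<times> real \<Rightarrow> real \<times> real"
  assumes "0 < \<theta>" "0 \<le> s" "s < 1"
    and contr: "\<And>k p q. k \<in> {1..n} \<Longrightarrow> rho \<theta> (fs k p) (fs k q) \<le> s * rho \<theta> p q"
    and K: "K \<noteq> {}" "compact K" "K = (\<Union>k\<in>{1..n}. fs k ` K)"
    and K': "K' \<noteq> {}" "compact K'" "K' = (\<Union>k\<in>{1..n}. fs k ` K')"
  shows "K = K'"
proof -
  have subset: "K \<subseteq> K'" if "compact K" "K = (\<Union>k\<in>{1..n}. fs k ` K)"
    and "K' \<noteq> {}" "compact K'" "K' = (\<Union>k\<in>{1..n}. fs k ` K')" for K K'
  proof (rule ifs_invariant_set_subset[OF assms(1-3) contr \<open>compact K\<close> _ that(3,4)])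
    show "K \<subseteq> (\<Union>k\<in>{1..n}. fs k ` K)"
      using that(2) by (rule eq_refl)
    show "fs k ` K' \<subseteq> K'" if "k \<in> {1..n}" for k
      using that by (metis \<open>K' = _\<close> UN_upper)
  qed
  show ?thesis
    using subset[OF K(2,3) K'] subset[OF K'(2,3) K] by (rule subset_antisym)
qed

lemma ifs_attractor_invariant:
  fixes fs :: "nat \<Rightarrow> real \<times> real \<Rightarrow> real \<times> real"
  assumes "0 < \<theta>" and s: "\<And>k. k \<in> {1..n} \<Longrightarrow> 0 \<le> s k \<and> s k < 1"
    and contr: "\<And>k p q. k \<in> {1..n} \<Longrightarrow> rho \<theta> (fs k p) (fs k q) \<le> s k * rho \<theta> p q"
    and fixed: "k0 \<in> {1..n}" "fs k0 p0 = p0"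
  shows "ifs_attractor fs n \<noteq> {}" "compact (ifs_attractor fs n)"
    "ifs_attractor fs n = (\<Union>k\<in>{1..n}. fs k ` ifs_attractor fs n)"
proof -
  define S where "S = Max (s ` {1..n})"
  have "S \<in> s ` {1..n}"
    unfolding S_def using fixed(1) by (intro Max_in) auto
  then have S: "0 \<le> S" "S < 1"
    using s by auto
  have contr_S: "rho \<theta> (fs k p) (fs k q) \<le> S * rho \<theta> p q" if "k \<in> {1..n}" for k p q
  proof -
    have "s k \<le> S"
      unfolding S_def using that by simp
    then show ?thesis
      using contr[OF that, of p q] rho_nonneg[of \<theta> p q] assms(1)
      by (meson less_imp_le mult_right_mono order_trans)
  qed
  have "\<exists>!K. K \<noteq> {} \<and> compact K \<and> K = (\<Union>k\<in>{1..n}. fs k ` K)"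
  proof (rule ex_ex1I)
    show "\<exists>K. K \<noteq> {} \<and> compact K \<and> K = (\<Union>k\<in>{1..n}. fs k ` K)"
      by (rule ifs_invariant_set_exists[of \<theta> S n fs, OF assms(1) S contr_S fixed])
    show "K = K'" if "K \<noteq> {} \<and> compact K \<and> K = (\<Union>k\<in>{1..n}. fs k ` K)"
      and "K' \<noteq> {} \<and> compact K' \<and> K' = (\<Union>k\<in>{1..n}. fs k ` K')" for K K'
      using that by (elim conjE) (rule ifs_invariant_set_unique[of \<theta> S n fs, OF assms(1) S contr_S])
  qed
  note attractor = theI'[OF this, folded ifs_attractor_def]
  then show "ifs_attractor fs n \<noteq> {}"
    by (rule conjunct1)
  show "compact (ifs_attractor fs n)"
    using attractor by (rule conjunct2[THEN conjunct1])
  show "ifs_attractor fs n = (\<Union>k\<in>{1..n}. fs k ` ifs_attractor fs n)"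
    using attractor by (rule conjunct2[THEN conjunct2])
qed

section \<open>Radii of the pieces of the attractor\<close>

definition radius_recursion :: "'i set \<Rightarrow> ('i \<Rightarrow> real) \<Rightarrow> real \<Rightarrow> ('i \<Rightarrow> real) \<Rightarrow> bool" where
  "radius_recursion I s M r \<longleftrightarrow>
    (\<forall>j\<in>I. 0 \<le> r j \<and> (r j = 0 \<or> (\<exists>i\<in>I. i \<noteq> j \<and> r j \<le> s j * (r i + M))))"

lemma farthest_points_radius_recursion:
  fixes fs :: "nat \<Rightarrow> real \<times> real \<Rightarrow> real \<times> real" and p z :: "nat \<Rightarrow> real \<times> real"
  assumes "0 \<le> \<theta>" and s: "\<And>k. k \<in> {1..n} \<Longrightarrow> 0 \<le> s k \<and> s k < 1"
    and contr: "\<And>k q q'. k \<in> {1..n} \<Longrightarrow> rho \<theta> (fs k q) (fs k q') \<le> s k * rho \<theta> q q'"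
    and fixed: "\<And>k. k \<in> {1..n} \<Longrightarrow> fs k (p k) = p k"
    and M: "\<And>i j. i \<in> {1..n} \<Longrightarrow> j \<in> {1..n} \<Longrightarrow> rho \<theta> (p i) (p j) \<le> M"
    and G: "G = (\<Union>k\<in>{1..n}. fs k ` G)"
    and z: "\<And>k. k \<in> {1..n} \<Longrightarrow> z k \<in> fs k ` G"
    and z_max: "\<And>k q. k \<in> {1..n} \<Longrightarrow> q \<in> fs k ` G \<Longrightarrow> rho \<theta> q (p k) \<le> rho \<theta> (z k) (p k)"
  shows "radius_recursion {1..n} s M (\<lambda>k. rho \<theta> (z k) (p k))"
  unfolding radius_recursion_def
proof (intro ballI conjI)
  fix k assume k: "k \<in> {1..n}"
  let ?r = "\<lambda>k. rho \<theta> (z k) (p k)"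
  show "0 \<le> ?r k"
    using assms(1) by (rule rho_nonneg)
  obtain j w where j: "j \<in> {1..n}" "w \<in> fs j ` G" and zk: "z k = fs k w"
    using z[OF k] G by blast
  have rk: "?r k \<le> s k * rho \<theta> w (p k)"
    unfolding zk using contr[OF k, of w "p k"] fixed[OF k] by simp
  show "?r k = 0 \<or> (\<exists>i\<in>{1..n}. i \<noteq> k \<and> ?r k \<le> s k * (?r i + M))"
  proof (cases "j = k")
    case True
    then have "?r k \<le> s k * ?r k"
      using rk z_max[OF k] j(2) s[OF k] by (smt (verit) mult_left_mono)
    then have "?r k = 0"
      using s[OF k] \<open>0 \<le> ?r k\<close> by (smt (verit) mult_le_cancel_right1)
    then show ?thesis ..
  next
    case False
    have "rho \<theta> w (p k) \<le> rho \<theta> w (p j) + rho \<theta> (p j) (p k)"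
      using assms(1) by (rule rho_triangle)
    also have "\<dots> \<le> ?r j + M"
      using z_max[OF j] M[OF j(1) k] by (intro add_mono) auto
    finally have "?r k \<le> s k * (?r j + M)"
      using rk s[OF k] by (smt (verit) mult_left_mono)
    then show ?thesis
      using j(1) False by blast
  qed
qed

lemma ifs_attractor_radii:
  fixes fs :: "nat \<Rightarrow> real \<times> real \<Rightarrow> real \<times> real" and p :: "nat \<Rightarrow> real \<times> real"
  assumes "0 < \<theta>" "1 \<le> n" and s: "\<And>k. k \<in> {1..n} \<Longrightarrow> 0 \<le> s k \<and> s k < 1"
    and contr: "\<And>k q q'. k \<in> {1..n} \<Longrightarrow> rho \<theta> (fs k q) (fs k q') \<le> s k * rho \<theta> q q'"
    and fixed: "\<And>k. k \<in> {1..n} \<Longrightarrow> fs k (p k) = p k"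
    and M: "\<And>i j. i \<in> {1..n} \<Longrightarrow> j \<in> {1..n} \<Longrightarrow> rho \<theta> (p i) (p j) \<le> M"
  obtains r where "radius_recursion {1..n} s M r"
    and "\<And>q. q \<in> ifs_attractor fs n \<Longrightarrow> \<exists>k\<in>{1..n}. rho \<theta> q (p k) \<le> r k"
proof -
  let ?G = "ifs_attractor fs n"
  have "1 \<in> {1..n}"
    using assms(2) by simp
  note G = ifs_attractor_invariant[of \<theta> n s fs, OF assms(1) s contr this fixed[OF this]]
  have "\<exists>z\<in>fs k ` ?G. \<forall>q\<in>fs k ` ?G. rho \<theta> q (p k) \<le> rho \<theta> z (p k)" if "k \<in> {1..n}" for k
  proof (rule continuous_attains_sup)
    show "compact (fs k ` ?G)"
      using G(2) rho_lipschitz_continuous_on[OF assms(1) _ contr[OF that]] s[OF that]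
      by (intro compact_continuous_image) auto
    show "fs k ` ?G \<noteq> {}"
      using G(1) by blast
    show "continuous_on (fs k ` ?G) (\<lambda>q. rho \<theta> q (p k))"
      unfolding rho_def by (intro continuous_intros)
  qed
  then obtain z where z: "\<And>k. k \<in> {1..n} \<Longrightarrow> z k \<in> fs k ` ?G"
    and z_max: "\<And>k q. k \<in> {1..n} \<Longrightarrow> q \<in> fs k ` ?G \<Longrightarrow> rho \<theta> q (p k) \<le> rho \<theta> (z k) (p k)"
    by metis
  show thesis
  proof
    show "radius_recursion {1..n} s M (\<lambda>k. rho \<theta> (z k) (p k))"
      using assms(1) by (intro farthest_points_radius_recursion[OF _ s contr fixed M G(3) z z_max]) auto
    show "\<exists>k\<in>{1..n}. rho \<theta> q (p k) \<le> rho \<theta> (z k) (p k)" if "q \<in> ?G" for q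
      using that G(3) z_max by blast
  qed
qed

lemma radius_recursion_le_max:
  fixes r s :: "'i \<Rightarrow> real"
  assumes "radius_recursion I s M r" "finite I" "j \<in> I" "0 \<le> s j" "0 \<le> M"
  shows "r j \<le> s j * (Max (r ` I) + M)"
proof -
  have le_max: "r i \<le> Max (r ` I)" if "i \<in> I" for i
    using assms(2) that by (intro Max_ge) auto
  have "0 \<le> r j"
    using assms(1,3) unfolding radius_recursion_def by blast
  then have "0 \<le> Max (r ` I)"
    using le_max[OF assms(3)] by linarith
  then show ?thesis
    using assms le_max unfolding radius_recursion_def
    by (smt (verit) add_right_mono mult_left_mono mult_nonneg_nonneg)
qed

lemma radius_recursion_max_bound:
  fixes r s :: "'i \<Rightarrow> real"
  assumes rec: "radius_recursion I s M r" and "finite I" "I \<noteq> {}"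
    and s: "\<And>j. j \<in> I \<Longrightarrow> 0 \<le> s j \<and> s j \<le> S"
    and P: "\<And>i j. i \<in> I \<Longrightarrow> j \<in> I \<Longrightarrow> i \<noteq> j \<Longrightarrow> s i * s j \<le> P" "0 \<le> P" "P < 1"
    and "0 \<le> M"
  shows "Max (r ` I) + M \<le> M * (1 + S) / (1 - P)"
proof -
  define t where "t = Max (r ` I)"
  have "t \<in> r ` I"
    unfolding t_def using assms(2,3) by (intro Max_in) auto
  then obtain k where k: "k \<in> I" "r k = t"
    by blast
  have "0 \<le> t"
    using rec k unfolding radius_recursion_def by blast
  consider "r k = 0" | i where "i \<in> I" "i \<noteq> k" "r k \<le> s k * (r i + M)"
    using rec k(1) unfolding radius_recursion_def by blast
  then have "t \<le> P * t + M * (S + P)"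
  proof cases
    case 1
    then show ?thesis
      using k s[OF k(1)] P(2) \<open>0 \<le> M\<close> by simp
  next
    case (2 i)
    have "s k * (r i + M) \<le> s k * (s i * (t + M) + M)"
      using radius_recursion_le_max[OF rec assms(2) 2(1)] s[OF 2(1)] s[OF k(1)] \<open>0 \<le> M\<close>
      unfolding t_def by (simp add: mult_left_mono)
    also have "\<dots> = (s k * s i) * t + M * (s k + s k * s i)"
      by (simp add: algebra_simps)
    also have "\<dots> \<le> P * t + M * (S + P)"
      using P(1)[OF k(1) 2(1)] 2(2) s[OF k(1)] \<open>0 \<le> t\<close> \<open>0 \<le> M\<close>
      by (intro add_mono mult_right_mono mult_left_mono) auto
    finally show ?thesis
      using 2(3) k(2) by linarith
  qed
  then have "(t + M) * (1 - P) \<le> M * (1 + S)"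
    by (simp add: algebra_simps)
  then show ?thesis
    unfolding t_def[symmetric] using P(3) by (simp add: field_simps)
qed

lemma radius_recursion_bound:
  fixes r s :: "'i \<Rightarrow> real"
  assumes rec: "radius_recursion I s M r" and "finite I" "k \<in> I"
    and s: "\<And>j. j \<in> I \<Longrightarrow> 0 \<le> s j \<and> s j \<le> S"
    and P: "\<And>i j. i \<in> I \<Longrightarrow> j \<in> I \<Longrightarrow> i \<noteq> j \<Longrightarrow> s i * s j \<le> P" "0 \<le> P" "P < 1"
    and "0 \<le> M"
  shows "r k \<le> M * s k * (1 + S) / (1 - P)"
proof -
  have "r k \<le> s k * (Max (r ` I) + M)"
    using radius_recursion_le_max[OF rec assms(2,3)] s[OF assms(3)] \<open>0 \<le> M\<close> by simp
  also have "\<dots> \<le> s k * (M * (1 + S) / (1 - P))"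
    using radius_recursion_max_bound[OF rec assms(2) _ s P \<open>0 \<le> M\<close>] assms(3) s[OF assms(3)]
    by (intro mult_left_mono) auto
  finally show ?thesis
    by (simp only: times_divide_eq_right mult.left_commute[of "s k"])
qed

lemma radius_recursion_bound_refined:
  fixes r s :: "'i \<Rightarrow> real"
  assumes rec: "radius_recursion I s M r" and "finite I" "k \<in> I"
    and s: "\<And>j. j \<in> I \<Longrightarrow> 0 \<le> s j \<and> s j \<le> S"
    and P: "\<And>i j. i \<in> I \<Longrightarrow> j \<in> I \<Longrightarrow> i \<noteq> j \<Longrightarrow> s i * s j \<le> P" "0 \<le> P" "P < 1"
    and "0 \<le> M"
    and S': "\<And>j. j \<in> I \<Longrightarrow> j \<noteq> k \<Longrightarrow> s j \<le> S'" "0 \<le> S'" "S' * S \<le> P"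
  shows "r k \<le> M * s k * (1 + S') / (1 - P)"
proof -
  consider "r k = 0" | i where "i \<in> I" "i \<noteq> k" "r k \<le> s k * (r i + M)"
    using rec assms(3) unfolding radius_recursion_def by blast
  then show ?thesis
  proof cases
    case 1
    then show ?thesis
      using s[OF assms(3)] S'(2) P(3) \<open>0 \<le> M\<close> by simp
  next
    case (2 i)
    have "r i \<le> M * s i * (1 + S) / (1 - P)"
      by (rule radius_recursion_bound[OF rec assms(2) 2(1) s P \<open>0 \<le> M\<close>])
    also have "\<dots> \<le> M * S' * (1 + S) / (1 - P)"
      using S'(1)[OF 2(1,2)] s[OF 2(1)] \<open>0 \<le> M\<close> P(3)
      by (intro divide_right_mono mult_right_mono mult_left_mono) auto
    finally have "(r i + M) * (1 - P) \<le> M * S' * (1 + S) + M * (1 - P)"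
      using P(3) by (simp add: field_simps)
    also have "\<dots> \<le> M * (1 + S')"
      using S'(3) \<open>0 \<le> M\<close> by (simp add: algebra_simps mult_left_mono)
    finally have "r i + M \<le> M * (1 + S') / (1 - P)"
      using P(3) by (simp add: field_simps)
    then have "s k * (r i + M) \<le> s k * (M * (1 + S') / (1 - P))"
      using s[OF assms(3)] by (intro mult_left_mono) auto
    with 2(3) show ?thesis
      by (simp only: times_divide_eq_right mult.left_commute[of "s k"])
  qed
qed

lemma distinct_product_le:
  fixes s :: "'i \<Rightarrow> real"
  assumes s: "\<And>k. k \<in> I \<Longrightarrow> 0 \<le> s k \<and> s k \<le> S" and S': "\<And>k. k \<in> I \<Longrightarrow> k \<noteq> k0 \<Longrightarrow> s k \<le> S'"
    and "i \<in> I" "j \<in> I" "i \<noteq> j"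
  shows "s i * s j \<le> S' * S"
proof (cases "i = k0")
  case True
  then have "s j * s i \<le> S' * S"
    using S'[of j] s[of i] s[of j] assms(3-5) by (intro mult_mono) auto
  then show ?thesis
    by (simp add: mult.commute)
next
  case False
  then show ?thesis
    using S'[of i] s[of i] s[of j] assms(3-5) by (intro mult_mono) auto
qed

lemma sorted_permutation_le:
  fixes s :: "nat \<Rightarrow> real"
  assumes sorted: "\<And>i j. 1 \<le> i \<Longrightarrow> i \<le> j \<Longrightarrow> j \<le> n \<Longrightarrow> s (\<sigma> i) \<le> s (\<sigma> j)"
    and "m \<le> n" "k \<in> \<sigma> ` {1..m}"
  shows "s k \<le> s (\<sigma> m)"
  using assms(2,3) sorted by auto

lemma sorted_radius_bounds:
  fixes r s :: "nat \<Rightarrow> real"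
  assumes "2 \<le> n" and perm: "\<sigma> permutes {1..n}"
    and sorted: "\<And>i j. 1 \<le> i \<Longrightarrow> i \<le> j \<Longrightarrow> j \<le> n \<Longrightarrow> s (\<sigma> i) \<le> s (\<sigma> j)"
    and s: "\<And>k. k \<in> {1..n} \<Longrightarrow> 0 \<le> s k \<and> s k < 1"
    and "0 \<le> M" and rec: "radius_recursion {1..n} s M r"
  shows "\<And>j. j \<in> {1..n - 1} \<Longrightarrow>
      r (\<sigma> j) \<le> M * s (\<sigma> j) * (1 + s (\<sigma> n)) / (1 - s (\<sigma> (n - 1)) * s (\<sigma> n))"
    and "r (\<sigma> n) \<le> M * s (\<sigma> n) * (1 + s (\<sigma> (n - 1))) / (1 - s (\<sigma> (n - 1)) * s (\<sigma> n))"
proof -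
  let ?S = "s (\<sigma> n)" and ?S' = "s (\<sigma> (n - 1))"
  have \<sigma>: "\<sigma> j \<in> {1..n}" if "j \<in> {1..n}" for j
    using perm that by (rule permutes_in_image[THEN iffD2])
  have img: "\<sigma> ` {1..n} = {1..n}"
    by (rule permutes_image[OF perm])
  have s_bounds: "0 \<le> s k \<and> s k \<le> ?S" if "k \<in> {1..n}" for k
  proof -
    have "s k \<le> ?S"
      by (rule sorted_permutation_le[where s = s and \<sigma> = \<sigma>, OF sorted]) (use that img in auto)
    then show ?thesis
      using s[OF that] by simp
  qed
  have "{1..n} = insert n {1..n - 1}"
    using assms(1) by auto
  then have le_S': "s k \<le> ?S'" if "k \<in> {1..n}" "k \<noteq> \<sigma> n" for k
    by (intro sorted_permutation_le[where s = s and \<sigma> = \<sigma>, OF sorted]) (use that img in auto)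
  have "?S' < 1" "0 \<le> ?S" "?S < 1"
    using s[OF \<sigma>, of n] s[OF \<sigma>, of "n - 1"] assms(1) by auto
  then have P: "0 \<le> ?S' * ?S" "?S' * ?S < 1"
    using s_bounds[OF \<sigma>, of "n - 1"] assms(1) mult_strict_mono'[of ?S' 1 ?S 1] by auto
  note prod = distinct_product_le[of "{1..n}" s ?S "\<sigma> n" ?S', OF s_bounds le_S']
  show "r (\<sigma> j) \<le> M * s (\<sigma> j) * (1 + ?S) / (1 - ?S' * ?S)" if "j \<in> {1..n - 1}" for j
    using that \<sigma>[of j] by (intro radius_recursion_bound[OF rec _ _ s_bounds prod P \<open>0 \<le> M\<close>]) auto
  show "r (\<sigma> n) \<le> M * s (\<sigma> n) * (1 + ?S') / (1 - ?S' * ?S)"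
    using \<sigma>[of n] assms(1) le_S' P(1) s_bounds[OF \<sigma>, of "n - 1"]
    by (intro radius_recursion_bound_refined[OF rec _ _ s_bounds prod P \<open>0 \<le> M\<close>]) auto
qed

lemma sorted_envelope_bound:
  fixes v R w :: "nat \<Rightarrow> real"
  assumes perm: "\<sigma> permutes {1..n}" and "k \<in> {1..n}" "\<bar>z - v k\<bar> \<le> R k"
    and w: "\<And>j. j \<in> {1..n - 1} \<Longrightarrow> R (\<sigma> j) \<le> w j" and wn: "R (\<sigma> n) \<le> wn"
  shows "z \<in> {min (Min ((\<lambda>j. v (\<sigma> j) - w j) ` {1..n - 1})) (v (\<sigma> n) - wn)
            .. max (Max ((\<lambda>j. v (\<sigma> j) + w j) ` {1..n - 1})) (v (\<sigma> n) + wn)}"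
proof -
  obtain i where i: "i \<in> {1..n}" "\<sigma> i = k"
    using permutes_image[OF perm] assms(2) by (metis imageE)
  show ?thesis
  proof (cases "i = n")
    case True
    then show ?thesis
      using assms(3) wn i(2) by auto
  next
    case False
    then have i': "i \<in> {1..n - 1}"
      using i(1) by auto
    moreover have "\<bar>z - v (\<sigma> i)\<bar> \<le> w i"
      using assms(3) w[OF i'] i(2) by simp
    moreover have "Min ((\<lambda>j. v (\<sigma> j) - w j) ` {1..n - 1}) \<le> v (\<sigma> i) - w i"
      using i' by (intro Min_le) auto
    moreover have "v (\<sigma> i) + w i \<le> Max ((\<lambda>j. v (\<sigma> j) + w j) ` {1..n - 1})"
      using i' by (intro Max_ge) auto
    ultimately have "Min ((\<lambda>j. v (\<sigma> j) - w j) ` {1..n - 1}) \<le> z"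
      "z \<le> Max ((\<lambda>j. v (\<sigma> j) + w j) ` {1..n - 1})"
      by linarith+
    then show ?thesis
      by (simp add: min.coboundedI1 max.coboundedI1)
  qed
qed

lemma ifs_attractor_snd_bounds:
  fixes fs :: "nat \<Rightarrow> real \<times> real \<Rightarrow> real \<times> real" and p :: "nat \<Rightarrow> real \<times> real"
  assumes "2 \<le> n" "0 < \<theta>" and s: "\<And>k. k \<in> {1..n} \<Longrightarrow> 0 \<le> s k \<and> s k < 1"
    and contr: "\<And>k q q'. k \<in> {1..n} \<Longrightarrow> rho \<theta> (fs k q) (fs k q') \<le> s k * rho \<theta> q q'"
    and fixed: "\<And>k. k \<in> {1..n} \<Longrightarrow> fs k (p k) = p k"
    and M: "\<And>i j. i \<in> {1..n} \<Longrightarrow> j \<in> {1..n} \<Longrightarrow> rho \<theta> (p i) (p j) \<le> M"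
    and perm: "\<sigma> permutes {1..n}"
    and sorted: "\<And>i j. 1 \<le> i \<Longrightarrow> i \<le> j \<Longrightarrow> j \<le> n \<Longrightarrow> s (\<sigma> i) \<le> s (\<sigma> j)"
    and "q \<in> ifs_attractor fs n"
  defines "D \<equiv> 1 - s (\<sigma> (n - 1)) * s (\<sigma> n)"
  shows "snd q \<in>
    {min (Min ((\<lambda>j. snd (p (\<sigma> j)) - M * s (\<sigma> j) * (1 + s (\<sigma> n)) / (\<theta> * D)) ` {1..n - 1}))
         (snd (p (\<sigma> n)) - M * s (\<sigma> n) * (1 + s (\<sigma> (n - 1))) / (\<theta> * D))
     .. max (Max ((\<lambda>j. snd (p (\<sigma> j)) + M * s (\<sigma> j) * (1 + s (\<sigma> n)) / (\<theta> * D)) ` {1..n - 1}))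
         (snd (p (\<sigma> n)) + M * s (\<sigma> n) * (1 + s (\<sigma> (n - 1))) / (\<theta> * D))}"
proof -
  have one: "1 \<in> {1..n}"
    using assms(1) by simp
  then have "0 \<le> M"
    using M[OF one one] by (simp add: rho_def)
  obtain r where rec: "radius_recursion {1..n} s M r"
    and cover: "\<And>q. q \<in> ifs_attractor fs n \<Longrightarrow> \<exists>k\<in>{1..n}. rho \<theta> q (p k) \<le> r k"
    using ifs_attractor_radii[of \<theta> n s fs p M] assms(1,2) s contr fixed M by auto
  note bounds = sorted_radius_bounds[OF assms(1) perm, of s M r, folded D_def]
  obtain k where k: "k \<in> {1..n}" "rho \<theta> q (p k) \<le> r k"
    using cover[OF assms(9)] by blast
  then have "\<bar>snd q - snd (p k)\<bar> \<le> r k / \<theta>"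
    using assms(2) by (simp add: rho_def field_simps)
  then show ?thesis
  proof (rule sorted_envelope_bound[where R = "\<lambda>k. r k / \<theta>" and v = "\<lambda>k. snd (p k)", OF perm k(1)])
    show "r (\<sigma> j) / \<theta> \<le> M * s (\<sigma> j) * (1 + s (\<sigma> n)) / (\<theta> * D)" if "j \<in> {1..n - 1}" for j
      using divide_right_mono[OF bounds(1)[OF sorted s \<open>0 \<le> M\<close> rec that], of \<theta>] assms(2)
      by (simp add: mult.commute)
    show "r (\<sigma> n) / \<theta> \<le> M * s (\<sigma> n) * (1 + s (\<sigma> (n - 1))) / (\<theta> * D)"
      using divide_right_mono[OF bounds(2)[OF sorted s \<open>0 \<le> M\<close> rec], of \<theta>] assms(2)
      by (simp add: mult.commute)
  qed
qed

section \<open>Affine fractal interpolation\<close>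

definition affine_map :: "real \<Rightarrow> real \<Rightarrow> real \<Rightarrow> real \<Rightarrow> real \<Rightarrow> real \<times> real \<Rightarrow> real \<times> real" where
  "affine_map a b c d e = (\<lambda>p. (a * fst p + b, c * fst p + d * snd p + e))"

lemma rho_affine_map_le:
  assumes "0 \<le> a" "0 \<le> d" "0 \<le> \<theta>"
  shows "rho \<theta> (affine_map a b c d e p) (affine_map a b c d e q) \<le> max (a + \<theta> * \<bar>c\<bar>) d * rho \<theta> p q"
proof -
  define \<delta>\<^sub>1 \<delta>\<^sub>2 where "\<delta>\<^sub>1 = fst p - fst q" and "\<delta>\<^sub>2 = snd p - snd q"
  have "fst (affine_map a b c d e p) - fst (affine_map a b c d e q) = a * \<delta>\<^sub>1"
    "snd (affine_map a b c d e p) - snd (affine_map a b c d e q) = c * \<delta>\<^sub>1 + d * \<delta>\<^sub>2"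
    unfolding affine_map_def \<delta>\<^sub>1_def \<delta>\<^sub>2_def by (simp_all add: algebra_simps)
  then have "rho \<theta> (affine_map a b c d e p) (affine_map a b c d e q) = a * \<bar>\<delta>\<^sub>1\<bar> + \<theta> * \<bar>c * \<delta>\<^sub>1 + d * \<delta>\<^sub>2\<bar>"
    unfolding rho_def using assms(1) by (simp add: abs_mult)
  also have "\<dots> \<le> a * \<bar>\<delta>\<^sub>1\<bar> + \<theta> * (\<bar>c\<bar> * \<bar>\<delta>\<^sub>1\<bar> + d * \<bar>\<delta>\<^sub>2\<bar>)"
    using assms abs_triangle_ineq[of "c * \<delta>\<^sub>1" "d * \<delta>\<^sub>2"] by (simp add: abs_mult mult_left_mono)
  also have "\<dots> = (a + \<theta> * \<bar>c\<bar>) * \<bar>\<delta>\<^sub>1\<bar> + d * (\<theta> * \<bar>\<delta>\<^sub>2\<bar>)"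
    by (simp add: algebra_simps)
  also have "\<dots> \<le> max (a + \<theta> * \<bar>c\<bar>) d * \<bar>\<delta>\<^sub>1\<bar> + max (a + \<theta> * \<bar>c\<bar>) d * (\<theta> * \<bar>\<delta>\<^sub>2\<bar>)"
    using assms(3) by (intro add_mono mult_right_mono) auto
  also have "\<dots> = max (a + \<theta> * \<bar>c\<bar>) d * rho \<theta> p q"
    unfolding rho_def \<delta>\<^sub>1_def \<delta>\<^sub>2_def by (simp add: algebra_simps)
  finally show ?thesis .
qed

lemma affine_map_fixed_point:
  fixes a b c d e :: real
  assumes "a \<noteq> 1" "d \<noteq> 1"
  defines "u \<equiv> b / (1 - a)" and "v \<equiv> b * c / ((1 - a) * (1 - d)) + e / (1 - d)"
  shows "affine_map a b c d e (u, v) = (u, v)"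
proof -
  have "a * u + b = u"
    using assms(1) unfolding u_def by (simp add: field_simps)
  moreover have "(1 - d) * v = b * c / (1 - a) + e"
    using assms(2) unfolding v_def by (simp add: distrib_left)
  then have "c * u + d * v + e = v"
    unfolding u_def by (simp add: algebra_simps)
  ultimately show ?thesis
    unfolding affine_map_def by simp
qed

definition vertical_weight :: "(nat \<Rightarrow> real) \<Rightarrow> (nat \<Rightarrow> real) \<Rightarrow> nat set \<Rightarrow> real" where
  "vertical_weight a c I =
    (if \<forall>k\<in>I. c k = 0 then 1 else (1 - Max (a ` I)) / (2 * Max ((\<lambda>k. \<bar>c k\<bar>) ` I)))"

lemma add_weighted_lt_1:
  fixes A C \<alpha> \<gamma> :: real
  assumes "\<alpha> \<le> A" "A < 1" "0 \<le> \<gamma>" "\<gamma> \<le> C" "0 < C"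
  shows "\<alpha> + (1 - A) / (2 * C) * \<gamma> < 1"
proof -
  have "(1 - A) / (2 * C) * \<gamma> \<le> (1 - A) / (2 * C) * C"
    using assms by (intro mult_left_mono) auto
  also have "\<dots> = (1 - A) / 2"
    using assms(5) by simp
  finally have "\<alpha> + (1 - A) / (2 * C) * \<gamma> \<le> A + (1 - A) / 2"
    using assms(1) by (rule add_mono[rotated])
  also have "\<dots> < 1"
    using assms(2) by (simp add: field_simps)
  finally show ?thesis .
qed

lemma vertical_weight_bounds:
  assumes "finite I" and a: "\<And>k. k \<in> I \<Longrightarrow> a k < 1"
  shows "0 < vertical_weight a c I" "\<And>k. k \<in> I \<Longrightarrow> a k + vertical_weight a c I * \<bar>c k\<bar> < 1"
proof -
  have "0 < vertical_weight a c I \<and> (\<forall>k\<in>I. a k + vertical_weight a c I * \<bar>c k\<bar> < 1)"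
  proof (cases "\<forall>k\<in>I. c k = 0")
    case True
    then show ?thesis
      using a by (simp add: vertical_weight_def)
  next
    case False
    then obtain k0 where k0: "k0 \<in> I" "c k0 \<noteq> 0"
      by blast
    define A C where "A = Max (a ` I)" and "C = Max ((\<lambda>k. \<bar>c k\<bar>) ` I)"
    have "A \<in> a ` I"
      unfolding A_def using assms(1) k0(1) by (intro Max_in) auto
    then have "A < 1"
      using a by blast
    have "\<bar>c k0\<bar> \<le> C"
      unfolding C_def using assms(1) k0(1) by (intro Max_ge) auto
    then have "0 < C"
      using k0(2) by linarith
    have "vertical_weight a c I = (1 - A) / (2 * C)"
      unfolding vertical_weight_def A_def C_def using False by (rule if_not_P)
    moreover have "a k + (1 - A) / (2 * C) * \<bar>c k\<bar> < 1" if "k \<in> I" for k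
      using \<open>A < 1\<close> \<open>0 < C\<close> assms(1) that
      by (intro add_weighted_lt_1) (auto simp: A_def C_def)
    ultimately show ?thesis
      using \<open>A < 1\<close> \<open>0 < C\<close> by simp
  qed
  then show "0 < vertical_weight a c I" "\<And>k. k \<in> I \<Longrightarrow> a k + vertical_weight a c I * \<bar>c k\<bar> < 1"
    by blast+
qed

lemma increasing_upto_less:
  fixes x :: "nat \<Rightarrow> real"
  assumes "\<And>k. k < n \<Longrightarrow> x k < x (Suc k)" "i < j" "j \<le> n"
  shows "x i < x j"
  using assms(2,3)
proof (induction rule: less_Suc_induct)
  case (1 i)
  then show ?case
    using assms(1) by simp
next
  case (2 i j k)
  then show ?case
    by force
qed

lemma increment_ratio_bounds:
  fixes x :: "nat \<Rightarrow> real"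
  assumes inc: "\<And>k. k < n \<Longrightarrow> x k < x (Suc k)" and "2 \<le> n" "k \<in> {1..n}"
  shows "0 < (x k - x (k - 1)) / (x n - x 0)" "(x k - x (k - 1)) / (x n - x 0) < 1"
proof -
  have less: "x i < x j" if "i < j" "j \<le> n" for i j
    using increasing_upto_less[where x = x and n = n, OF inc that] .
  have "x 0 < x n"
    using less[of 0 n] assms(2) by simp
  moreover have "x (k - 1) < x k"
    using less[of "k - 1" k] assms(3) by simp
  moreover have "x k - x (k - 1) < x n - x 0"
  proof (cases "k = 1")
    case True
    then show ?thesis
      using less[of 1 n] assms(2) by simp
  next
    case False
    then have "0 < k - 1" "k - 1 \<le> n"
      using assms(3) by auto
    then have "x 0 < x (k - 1)"
      by (rule less)
    moreover have "x k \<le> x n"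
      using less[of k n] assms(3) by (cases "k = n") auto
    ultimately show ?thesis
      by simp
  qed
  ultimately show "0 < (x k - x (k - 1)) / (x n - x 0)" "(x k - x (k - 1)) / (x n - x 0) < 1"
    by simp_all
qed

theorem theorem3p2:
  fixes n :: nat and x y d :: "nat \<Rightarrow> real" and f :: "real \<Rightarrow> real"
    and \<sigma> :: "nat \<Rightarrow> nat"
  assumes n2: "n \<ge> 2"
    and xinc: "\<And>k. k < n \<Longrightarrow> x k < x (Suc k)"
    and drange: "\<And>k. k \<in> {1..n} \<Longrightarrow> 0 \<le> d k \<and> d k < 1"
  defines "a \<equiv> \<lambda>k. (x k - x (k - 1)) / (x n - x 0)"
    and "b \<equiv> \<lambda>k. (x n * x (k - 1) - x 0 * x k) / (x n - x 0)"
    and "c \<equiv> \<lambda>k. (y k - y (k - 1)) / (x n - x 0) - d k * (y n - y 0) / (x n - x 0)"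
    and "e \<equiv> \<lambda>k. (x n * y (k - 1) - x 0 * y k) / (x n - x 0)
                   - d k * (x n * y 0 - x 0 * y n) / (x n - x 0)"
  defines "fk \<equiv> \<lambda>k (p :: real \<times> real). (a k * fst p + b k, c k * fst p + d k * snd p + e k)"
  defines "\<theta> \<equiv> (if (\<forall>k\<in>{1..n}. c k = 0) then 1
               else (1 - Max (a ` {1..n})) / (2 * Max ((\<lambda>k. \<bar>c k\<bar>) ` {1..n})))"
  defines "u \<equiv> \<lambda>k. b k / (1 - a k)"
    and "v \<equiv> \<lambda>k. b k * c k / ((1 - a k) * (1 - d k)) + e k / (1 - d k)"
    and "s \<equiv> \<lambda>k. max (a k + \<theta> * \<bar>c k\<bar>) (d k)"
  defines "M \<equiv> Max {\<bar>u i - u j\<bar> + \<theta> * \<bar>v i - v j\<bar> | i j. i \<in> {1..n} \<and> j \<in> {1..n}}"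
  assumes fcont: "continuous_on {x 0..x n} f"
    and finterp: "\<And>k. k \<le> n \<Longrightarrow> f (x k) = y k"
    and fgraph: "{(t, f t) | t. t \<in> {x 0..x n}} = ifs_attractor fk n"
  assumes sigma_perm: "\<sigma> permutes {1..n}"
    and sigma_sort: "\<And>i j. 1 \<le> i \<Longrightarrow> i \<le> j \<Longrightarrow> j \<le> n \<Longrightarrow> s (\<sigma> i) \<le> s (\<sigma> j)"
  defines "D \<equiv> 1 - s (\<sigma> (n - 1)) * s (\<sigma> n)"
  defines "A \<equiv> min (Min ((\<lambda>j. v (\<sigma> j) - M * s (\<sigma> j) * (1 + s (\<sigma> n)) / (\<theta> * D)) ` {1..n - 1}))
                   (v (\<sigma> n) - M * s (\<sigma> n) * (1 + s (\<sigma> (n - 1))) / (\<theta> * D))"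
    and "B \<equiv> max (Max ((\<lambda>j. v (\<sigma> j) + M * s (\<sigma> j) * (1 + s (\<sigma> n)) / (\<theta> * D)) ` {1..n - 1}))
                   (v (\<sigma> n) + M * s (\<sigma> n) * (1 + s (\<sigma> (n - 1))) / (\<theta> * D))"
  shows "f ` {x 0..x n} \<subseteq> {A..B}"
proof -
  have a: "0 < a k" "a k < 1" if "k \<in> {1..n}" for k
    using increment_ratio_bounds[where x = x and n = n, OF xinc n2 that] unfolding a_def by simp_all
  have "\<theta> = vertical_weight a c {1..n}"
    unfolding \<theta>_def vertical_weight_def ..
  then have \<theta>: "0 < \<theta>" "\<And>k. k \<in> {1..n} \<Longrightarrow> a k + \<theta> * \<bar>c k\<bar> < 1"
    using vertical_weight_bounds[where I = "{1..n}" and a = a and c = c] a by auto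
  have s: "0 \<le> s k \<and> s k < 1" if "k \<in> {1..n}" for k
    using \<theta>(2)[OF that] drange[OF that] unfolding s_def by auto
  have fk: "fk k = affine_map (a k) (b k) (c k) (d k) (e k)" for k
    unfolding fk_def affine_map_def ..
  have contr: "rho \<theta> (fk k p) (fk k q) \<le> s k * rho \<theta> p q" if "k \<in> {1..n}" for k p q
    unfolding fk s_def using a(1)[OF that] drange[OF that] \<theta>(1) by (intro rho_affine_map_le) auto
  have fixed: "fk k (u k, v k) = (u k, v k)" if "k \<in> {1..n}" for k
    unfolding fk u_def v_def using a(2)[OF that] drange[OF that] by (intro affine_map_fixed_point) auto
  have M: "rho \<theta> (u i, v i) (u j, v j) \<le> M" if "i \<in> {1..n}" "j \<in> {1..n}" for i j
    unfolding M_def rho_def using that by (intro Max_ge finite_image_set2) auto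
  have "snd q \<in> {A..B}" if "q \<in> ifs_attractor fk n" for q
    using ifs_attractor_snd_bounds[of n \<theta> s fk "\<lambda>k. (u k, v k)" M \<sigma> q] n2 \<theta>(1) s contr fixed M
      sigma_perm sigma_sort that
    unfolding A_def B_def D_def by simp
  then show ?thesis
    unfolding fgraph[symmetric] by force
qed

end
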